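(* For every positive integer $n$ there exists a permutation of length $2n-1$ that contains every riffle shuffle permutation of length $n$ as a pattern, and there exists a permutation of length $2n-1$ that contains every antiriffle shuffle permutation of length $n$ as a pattern.
   Context: A permutation $\pi$ of length $k$ is a pattern of (is contained in) a permutation $\sigma$ if there are indices $\ell_1<\ell_2<\cdots<\ell_k$ such that for all $i,j$, $\pi_i<\pi_j$ if and only if $\sigma_{\ell_i}<\sigma_{\ell_j}$. The riffle shuffle permutations are the permutations avoiding (not containing as a pattern) each of $321$, $2143$ and $2413$; equivalently, permutations of $\{1,\dots,n\}$ obtained by interleaving the increasing sequences $1,2,\dots,k-1$ and $k,\dots,n$ for some $k$. An antiriffle shuffle permutation is a permutation whose inverse is a riffle shuffle permutation. *)

theory Defs
  imports Main
begin

text \<open>A permutation of length n is a list whose entries are exactly 1,...,n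
  (each once, since the length is n).\<close>
definition is_perm :: "nat \<Rightarrow> nat list \<Rightarrow> bool" where
  "is_perm n p \<longleftrightarrow> length p = n \<and> set p = {1..n}"

definition contains :: "nat list \<Rightarrow> nat list \<Rightarrow> bool" where
  "contains sigma pi \<longleftrightarrow>
     (\<exists>l :: nat \<Rightarrow> nat.
        (\<forall>i j. i < j \<and> j < length pi \<longrightarrow> l i < l j) \<and>
        (\<forall>i < length pi. l i < length sigma) \<and>
        (\<forall>i < length pi. \<forall>j < length pi. (pi ! i < pi ! j) \<longleftrightarrow> (sigma ! l i < sigma ! l j)))"

definition avoids :: "nat list \<Rightarrow> nat list \<Rightarrow> bool" where
  "avoids sigma pi \<longleftrightarrow> \<not> contains sigma pi"

definition riffle :: "nat list \<Rightarrow> bool" where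
  "riffle p \<longleftrightarrow> avoids p [3,2,1] \<and> avoids p [2,1,4,3] \<and> avoids p [2,4,1,3]"

definition perm_inverse :: "nat \<Rightarrow> nat list \<Rightarrow> nat list \<Rightarrow> bool" where
  "perm_inverse n p q \<longleftrightarrow> is_perm n p \<and> is_perm n q \<and> (\<forall>i < n. q ! (p ! i - 1) = i + 1)"

definition antiriffle :: "nat list \<Rightarrow> bool" where
  "antiriffle p \<longleftrightarrow> (\<exists>q. perm_inverse (length p) p q \<and> riffle q)"

end

theory Submission
  imports Defs
begin

text \<open>Avoiding 321, 2143 and 2413 forces every inversion to have its smaller entry below the
  larger entry of every other inversion, so a riffle permutation of length \<open>n\<close> is determined
  by a cut \<open>t\<close> and a word in {low, high} of length \<open>n\<close>, entries on each side of the cut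
  appearing in increasing order.  In \<open>n, 1, n+1, 2, \<dots>, n-1, 2n-1\<close> the high and low values
  alternate, and every such word (made to contain a high letter) occurs in the alternation
  high, low, \<dots>, high of length \<open>2n-1\<close>; matching the words embeds the pattern.  Pattern
  containment is preserved under inverting both permutations, which gives the antiriffle case
  with the inverse permutation \<open>2, 4, \<dots>, 2n-2, 1, 3, \<dots>, 2n-1\<close>.\<close>

lemma is_perm_length: "is_perm n p \<Longrightarrow> length p = n"
  unfolding is_perm_def by simp

lemma is_perm_nth_bounds: "is_perm n p \<Longrightarrow> i < n \<Longrightarrow> 1 \<le> p!i \<and> p!i \<le> n"
  unfolding is_perm_def using nth_mem[of i p] by auto

lemma is_perm_nth_eq_iff: "is_perm n p \<Longrightarrow> i < n \<Longrightarrow> j < n \<Longrightarrow> p!i = p!j \<longleftrightarrow> i = j"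
  unfolding is_perm_def by (metis card_distinct card_atLeastAtMost diff_Suc_1 nth_eq_iff_index_eq)

lemma contains_of_indices:
  assumes "sorted_wrt (<) idx" "\<forall>x\<in>set idx. x < length sigma" "length idx = length pi"
    "\<forall>i<length pi. \<forall>j<length pi. (pi!i < pi!j) = (sigma!(idx!i) < sigma!(idx!j))"
  shows "contains sigma pi"
  unfolding contains_def
  using assms by (intro exI[of _ "(!) idx"]) (auto simp: sorted_wrt_iff_nth_less)

lemma contains_321I:
  "i < j \<Longrightarrow> j < k \<Longrightarrow> k < length p \<Longrightarrow> p!j < p!i \<Longrightarrow> p!k < p!j \<Longrightarrow> contains p [3,2,1]"
  by (rule contains_of_indices[where idx="[i,j,k]"]) (auto simp: less_Suc_eq numeral_eq_Suc nth_Cons')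

lemma contains_2143I:
  "a < b \<Longrightarrow> b < c \<Longrightarrow> c < d \<Longrightarrow> d < length p \<Longrightarrow> p!b < p!a \<Longrightarrow> p!a < p!d \<Longrightarrow> p!d < p!c
    \<Longrightarrow> contains p [2,1,4,3]"
  by (rule contains_of_indices[where idx="[a,b,c,d]"]) (auto simp: less_Suc_eq numeral_eq_Suc nth_Cons')

lemma contains_2413I:
  "a < b \<Longrightarrow> b < c \<Longrightarrow> c < d \<Longrightarrow> d < length p \<Longrightarrow> p!c < p!a \<Longrightarrow> p!a < p!d \<Longrightarrow> p!d < p!b
    \<Longrightarrow> contains p [2,4,1,3]"
  by (rule contains_of_indices[where idx="[a,b,c,d]"]) (auto simp: less_Suc_eq numeral_eq_Suc nth_Cons')

lemma riffle_inversions_nested: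
  assumes p: "is_perm n p" and "riffle p"
    and ij: "i < j" "j < n" "p!j < p!i" and ij': "i' < j'" "j' < n" "p!j' < p!i'"
  shows "p!j < p!i'"
proof (rule ccontr)
  assume "\<not> p!j < p!i'"
  then have le: "p!i' \<le> p!j" by simp
  have len: "length p = n" using is_perm_length[OF p] .
  have no321: "\<not> contains p [3,2,1]" and no2143: "\<not> contains p [2,1,4,3]"
    and no2413: "\<not> contains p [2,4,1,3]"
    using \<open>riffle p\<close> unfolding riffle_def avoids_def by auto
  show False
  proof (cases "p!i' = p!j")
    case True
    then have "i' = j" using is_perm_nth_eq_iff[OF p] ij ij' by simp
    then show False using contains_321I[of i j j' p] ij ij' len no321 by auto
  next
    case False
    with le have lt: "p!i' < p!j" by simp
    have "i \<noteq> i'" "i \<noteq> j'" "j \<noteq> j'" using lt ij ij' by auto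
    then consider "i < i'" | "i' < i" "j' < i" | "i' < i" "i < j'" "j < j'" | "i' < i" "i < j'" "j' < j"
      by linarith
    then show False
    proof cases
      case 1 then show False using contains_321I[of i i' j' p] ij ij' len no321 lt by auto
    next
      case 2 then show False using contains_2143I[of i' j' i j p] ij ij' len no2143 lt by auto
    next
      case 3 then show False using contains_321I[of i j j' p] ij ij' len no321 lt by auto
    next
      case 4 then show False using contains_2413I[of i' i j' j p] ij ij' len no2413 lt by auto
    qed
  qed
qed

definition riffle_at :: "nat \<Rightarrow> nat list \<Rightarrow> bool" where
  "riffle_at t p \<longleftrightarrow>
     (\<forall>i j. i < j \<longrightarrow> j < length p \<longrightarrow> (p!i \<le> t \<longleftrightarrow> p!j \<le> t) \<longrightarrow> p!i < p!j)"

lemma riffle_at_less_iff: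
  assumes "riffle_at t p" "i < j" "j < length p"
  shows "p!i < p!j \<longleftrightarrow> p!i \<le> t \<or> t < p!j"
  using assms unfolding riffle_at_def by (metis le_trans less_imp_le_nat linorder_not_le)

lemma riffle_imp_riffle_at:
  assumes p: "is_perm n p" and "riffle p"
  shows "\<exists>t. riffle_at t p"
proof -
  define B where "B = {p!j | j. \<exists>i<j. j < n \<and> p!j < p!i}"
  have "finite B" unfolding B_def by (rule finite_subset[of _ "(!) p ` {..<n}"]) auto
  define t where "t = (if B = {} then 0 else Max B)"
  have "p!i < p!j" if "i < j" "j < n" "p!i \<le> t \<longleftrightarrow> p!j \<le> t" for i j
  proof (rule ccontr)
    assume "\<not> p!i < p!j"
    then have inv: "p!j < p!i" using is_perm_nth_eq_iff[OF p, of i j] that by fastforce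
    then have "p!j \<in> B" unfolding B_def using that by blast
    then have "B \<noteq> {}" "p!j \<le> t" unfolding t_def using \<open>finite B\<close> by auto
    then have "t \<in> B" unfolding t_def using \<open>finite B\<close> Max_in by simp
    then obtain i' j' where "t = p!j'" "i' < j'" "j' < n" "p!j' < p!i'" unfolding B_def by blast
    then have "t < p!i" using riffle_inversions_nested[OF p \<open>riffle p\<close> _ _ _ that(1,2) inv] by simp
    with \<open>p!j \<le> t\<close> that(3) inv show False by simp
  qed
  then show ?thesis unfolding riffle_at_def is_perm_length[OF p] by blast
qed

lemma riffle_at_with_high_entry:
  assumes p: "is_perm n p" and "n \<ge> 1" and "riffle_at t p"
  shows "\<exists>t. riffle_at t p \<and> (\<exists>k<n. t < p!k)"
proof (cases "\<exists>k<n. t < p!k")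
  case False
  with \<open>riffle_at t p\<close> have "riffle_at 0 p"
    unfolding riffle_at_def is_perm_length[OF p] by (meson less_trans not_less)
  moreover have "0 < p!0" using is_perm_nth_bounds[OF p, of 0] \<open>n \<ge> 1\<close> by simp
  ultimately show ?thesis using \<open>n \<ge> 1\<close> by (metis less_le_trans zero_less_one)
qed (use assms in blast)

lemma contains_of_riffle_at:
  assumes p: "riffle_at t p" and s: "riffle_at u s"
    and mono: "\<forall>i j. i < j \<longrightarrow> j < length p \<longrightarrow> l i < l j"
    and bound: "\<forall>i<length p. l i < length s"
    and sides: "\<forall>i<length p. p!i \<le> t \<longleftrightarrow> s!(l i) \<le> u"
  shows "contains s p"
proof -
  have "p!i < p!j \<longleftrightarrow> s!(l i) < s!(l j)" if "i < length p" "j < length p" for i j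
  proof -
    consider "i < j" | "i = j" | "j < i" by linarith
    then show ?thesis
    proof cases
      case 1
      then show ?thesis using riffle_at_less_iff[OF p 1] riffle_at_less_iff[OF s, of "l i" "l j"]
        mono bound sides that by auto
    next
      case 3
      then show ?thesis using riffle_at_less_iff[OF p 3] riffle_at_less_iff[OF s, of "l j" "l i"]
        mono bound sides that by (metis not_less not_less_iff_gr_or_eq)
    qed simp
  qed
  then show ?thesis unfolding contains_def using mono bound by blast
qed

lemma alternating_word_embedding:
  fixes c :: "nat \<Rightarrow> bool"
  assumes "k < n" "c k"
  shows "\<exists>l. (\<forall>i j. i < j \<longrightarrow> j < n \<longrightarrow> l i < l j) \<and> (\<forall>i<n. l i < 2*n - 1 \<and> (even (l i) \<longleftrightarrow> c i))"
proof -
  \<comment> \<open>letter \<open>i\<close> goes to position \<open>2i\<close> or a neighbour; \<open>2i+1\<close> is needed only before the first 1\<close>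
  define seen where "seen i \<longleftrightarrow> (\<exists>k<i. c k)" for i
  define l where "l i = (if c i then 2*i else if seen i then 2*i - 1 else 2*i + 1)" for i
  have seen_pos: "i \<ge> 1" if "seen i" for i using that unfolding seen_def by auto
  have before_last: "i < n - 1" if "i < n" "\<not> c i" "\<not> seen i" for i
    using that assms unfolding seen_def by (metis less_Suc_eq Suc_pred' not_less_iff_gr_or_eq gr_implies_not0)
  have "l i < l j" if "i < j" "j < n" for i j
  proof (cases "j = Suc i")
    case True
    then have "\<not> c i \<and> \<not> seen i \<longrightarrow> \<not> seen j" unfolding seen_def by (auto simp: less_Suc_eq)
    then show ?thesis using True seen_pos[of j] unfolding l_def by auto
  next
    case False
    with that seen_pos[of j] show ?thesis unfolding l_def by auto
  qed
  moreover have "l i < 2*n - 1 \<and> (even (l i) \<longleftrightarrow> c i)" if "i < n" for i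
    using that before_last[of i] seen_pos[of i] unfolding l_def by auto
  ultimately show ?thesis by blast
qed

definition riffle_universal :: "nat \<Rightarrow> nat list" where
  "riffle_universal n = map (\<lambda>j. if even j then n + j div 2 else (j+1) div 2) [0..<2*n-1]"

lemma riffle_universal_nth:
  "j < 2*n - 1 \<Longrightarrow> riffle_universal n ! j = (if even j then n + j div 2 else (j+1) div 2)"
  unfolding riffle_universal_def by simp

lemma riffle_universal_nth_le_iff:
  "j < 2*n - 1 \<Longrightarrow> riffle_universal n ! j \<le> n - 1 \<longleftrightarrow> odd j"
  by (auto simp: riffle_universal_nth elim!: oddE)

lemma riffle_at_riffle_universal: "riffle_at (n - 1) (riffle_universal n)"
  unfolding riffle_at_def
  by (auto simp: riffle_universal_nth_le_iff riffle_universal_nth riffle_universal_def elim!: oddE evenE)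

lemma riffle_in_riffle_universal:
  assumes p: "is_perm n p" and "riffle p" and "n \<ge> 1"
  shows "contains (riffle_universal n) p"
proof -
  obtain t where t: "riffle_at t p" and "\<exists>k<n. t < p!k"
    using riffle_imp_riffle_at[OF p \<open>riffle p\<close>] riffle_at_with_high_entry[OF p \<open>n \<ge> 1\<close>] by blast
  then obtain l where mono: "\<forall>i j. i < j \<longrightarrow> j < n \<longrightarrow> l i < l j"
      and l: "\<forall>i<n. l i < 2*n - 1 \<and> (even (l i) \<longleftrightarrow> t < p!i)"
    using alternating_word_embedding[of _ n "\<lambda>i. t < p!i"] by blast
  show ?thesis
  proof (rule contains_of_riffle_at[OF t riffle_at_riffle_universal])
    show "\<forall>i<length p. p!i \<le> t \<longleftrightarrow> riffle_universal n ! l i \<le> n - 1"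
      using l riffle_universal_nth_le_iff is_perm_length[OF p] by (auto simp: not_less)
  qed (use mono l is_perm_length[OF p] riffle_universal_def in auto)
qed

lemma perm_inverseI:
  assumes len: "length p = n" "length q = n" and range: "\<forall>i<n. 1 \<le> p!i \<and> p!i \<le> n"
    and inv: "\<forall>i<n. q!(p!i - 1) = i + 1"
  shows "perm_inverse n p q"
proof -
  have "distinct p"
    unfolding distinct_conv_nth using len inv by (metis add_right_cancel)
  then have "card (set p) = card {1..n}" using len by (simp add: distinct_card)
  moreover have "set p \<subseteq> {1..n}" using len range by (auto simp: in_set_conv_nth)
  ultimately have "set p = {1..n}" by (simp add: card_subset_eq)
  have "v \<in> set q" if "v \<in> {1..n}" for v
  proof -
    have "v - 1 < n" using that by auto
    then have "q!(p!(v - 1) - 1) = v" "p!(v - 1) - 1 < n" using inv range that by force+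
    then show ?thesis using len by (metis nth_mem)
  qed
  then have "{1..n} \<subseteq> set q" by blast
  moreover have "card (set q) \<le> card {1..n}" using len card_length[of q] by simp
  ultimately have "set q = {1..n}" by (metis card_seteq finite_set)
  with \<open>set p = {1..n}\<close> show ?thesis using len inv unfolding perm_inverse_def is_perm_def by simp
qed

lemma perm_inverse_sym:
  assumes "perm_inverse n p q"
  shows "perm_inverse n q p"
proof -
  have p: "is_perm n p" and q: "is_perm n q" and inv: "\<forall>i<n. q!(p!i - 1) = i + 1"
    using assms unfolding perm_inverse_def by auto
  have "p!(q!v - 1) = v + 1" if "v < n" for v
  proof -
    have i: "q!v - 1 < n" using is_perm_nth_bounds[OF q that] that by linarith
    then have w: "p!(q!v - 1) - 1 < n" using is_perm_nth_bounds[OF p i] by linarith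
    have "q!(p!(q!v - 1) - 1) = q!v" using inv i is_perm_nth_bounds[OF q that] by simp
    then have "p!(q!v - 1) - 1 = v" using is_perm_nth_eq_iff[OF q w that] by simp
    then show ?thesis using is_perm_nth_bounds[OF p i] by linarith
  qed
  with p q show ?thesis unfolding perm_inverse_def by simp
qed

lemma contains_inverse:
  assumes s: "perm_inverse m s s'" and p: "perm_inverse n p p'" and "contains s p"
  shows "contains s' p'"
proof -
  have sp: "is_perm m s" "is_perm m s'" "is_perm n p" "is_perm n p'"
    using s p unfolding perm_inverse_def by auto
  have s_inv: "\<forall>j<m. s'!(s!j - 1) = j + 1" using s unfolding perm_inverse_def by simp
  have p'_inv: "\<forall>v<n. p!(p'!v - 1) = v + 1" using perm_inverse_sym[OF p] unfolding perm_inverse_def by simp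
  obtain l where mono: "\<forall>i j. i < j \<and> j < n \<longrightarrow> l i < l j" and bound: "\<forall>i<n. l i < m"
      and cmp: "\<forall>i<n. \<forall>j<n. p!i < p!j \<longleftrightarrow> s!l i < s!l j"
    using \<open>contains s p\<close> unfolding contains_def is_perm_length[OF sp(1)] is_perm_length[OF sp(3)] by blast
  define pos where "pos v = p'!v - 1" for v
  define l' where "l' v = s!(l (pos v)) - 1" for v
  have pos: "pos v < n \<and> p!(pos v) = v + 1" if "v < n" for v
    using is_perm_nth_bounds[OF sp(4) that] p'_inv that unfolding pos_def by auto
  have l': "l' v < m \<and> s'!(l' v) = l (pos v) + 1" if "v < n" for v
    using is_perm_nth_bounds[OF sp(1)] bound pos[OF that] s_inv unfolding l'_def by fastforce
  have l_less_iff: "l i < l j \<longleftrightarrow> i < j" if "i < n" "j < n" for i j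
    using mono that by (metis less_asym not_less_iff_gr_or_eq)
  have "l' v < l' w" if "v < w" "w < n" for v w
  proof -
    have "p!(pos v) < p!(pos w)" "pos v < n" "pos w < n" using pos that by auto
    then have "s!l (pos v) < s!l (pos w)" using cmp by blast
    then show ?thesis using is_perm_nth_bounds[OF sp(1)] bound pos that unfolding l'_def
      by (metis diff_less_mono le_less_trans less_imp_le_nat)
  qed
  moreover have "p'!v < p'!w \<longleftrightarrow> s'!l' v < s'!l' w" if "v < n" "w < n" for v w
  proof -
    have "p'!v < p'!w \<longleftrightarrow> pos v < pos w"
      using is_perm_nth_bounds[OF sp(4)] that unfolding pos_def by (metis diff_less_mono less_diff_iff)
    also have "\<dots> \<longleftrightarrow> l (pos v) < l (pos w)" using l_less_iff pos that by simp
    finally show ?thesis using l' that by simp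
  qed
  ultimately show ?thesis using l' unfolding contains_def is_perm_length[OF sp(2)] is_perm_length[OF sp(4)]
    by blast
qed

definition antiriffle_universal :: "nat \<Rightarrow> nat list" where
  "antiriffle_universal n = map (\<lambda>j. if j < n - 1 then 2*j + 2 else 2*(j - (n - 1)) + 1) [0..<2*n-1]"

lemma perm_inverse_riffle_universal:
  "perm_inverse (2*n - 1) (riffle_universal n) (antiriffle_universal n)"
proof (rule perm_inverseI)
  show "\<forall>j<2*n - 1. 1 \<le> riffle_universal n ! j \<and> riffle_universal n ! j \<le> 2*n - 1"
    by (auto simp: riffle_universal_nth elim!: oddE)
  show "\<forall>j<2*n - 1. antiriffle_universal n ! (riffle_universal n ! j - 1) = j + 1"
    by (auto simp: riffle_universal_nth antiriffle_universal_def elim!: oddE evenE)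
qed (simp_all add: riffle_universal_def antiriffle_universal_def)

lemma antiriffle_in_antiriffle_universal:
  assumes p: "is_perm n p" and "antiriffle p" and "n \<ge> 1"
  shows "contains (antiriffle_universal n) p"
proof -
  obtain q where pq: "perm_inverse n p q" and "riffle q"
    using \<open>antiriffle p\<close> unfolding antiriffle_def is_perm_length[OF p] by blast
  have "contains (riffle_universal n) q"
    using riffle_in_riffle_universal[OF _ \<open>riffle q\<close> \<open>n \<ge> 1\<close>] pq unfolding perm_inverse_def by blast
  then show ?thesis
    using contains_inverse[OF perm_inverse_riffle_universal perm_inverse_sym[OF pq]] by blast
qed

theorem theorem1:
  fixes n :: nat
  assumes "n \<ge> 1"
  shows "(\<exists>s. is_perm (2*n - 1) s \<and> (\<forall>p. is_perm n p \<and> riffle p \<longrightarrow> contains s p)) \<and>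
         (\<exists>s. is_perm (2*n - 1) s \<and> (\<forall>p. is_perm n p \<and> antiriffle p \<longrightarrow> contains s p))"
  using perm_inverse_riffle_universal[of n] riffle_in_riffle_universal[OF _ _ assms]
    antiriffle_in_antiriffle_universal[OF _ _ assms]
  unfolding perm_inverse_def by blast

end
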